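(* Let $p>3$ be prime and $q$ a power of $p$. The following plane curves are irreducible over $\overline{\mathbb{F}}_q$: $\tilde{\mathcal{G}}_1: X^2Z^2+Y^2Z^2-X^2Y^2=0$; $\tilde{\mathcal{G}}_2: Y^2Z^2+X^2Z^2+X^2Y^2-2XYZ(X+Y+Z)=0$; $\tilde{\mathcal{G}}_3: X^6+Y^6+Z^6-2(X^3Y^3+X^3Z^3+Y^3Z^3)=0$; $\tilde{\mathcal{G}}_4: (X^2+Y^2-Z^2)^3+27X^2Y^2Z^2=0$. *)

theory Defs
  imports "HOL-Computational_Algebra.Computational_Algebra"
begin

text \<open>The polynomial ring K[X,Y,Z] is represented as K[X][Y][Z], i.e. the type
  'a poly poly poly (innermost variable X, middle Y, outermost Z).
  A plane curve is irreducible iff its defining polynomial is irreducible in this ring.\<close>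

definition varX :: "'a::comm_ring_1 poly poly poly" where
  "varX = [:[:[:0, 1:]:]:]"

definition varY :: "'a::comm_ring_1 poly poly poly" where
  "varY = [:[:0, 1:]:]"

definition varZ :: "'a::comm_ring_1 poly poly poly" where
  "varZ = [:0, 1:]"

text \<open>Every element of the field is algebraic over the prime field
  (together with algebraic closedness and characteristic p this singles out
  the algebraic closure of F_p, which equals the algebraic closure of F_q).\<close>
definition algebraic_over_prime_field :: "'a::field itself \<Rightarrow> bool" where
  "algebraic_over_prime_field _ \<longleftrightarrow>
     (\<forall>x::'a. \<exists>f::'a poly. f \<noteq> 0 \<and> (\<forall>i. coeff f i \<in> range of_nat) \<and> poly f x = 0)"

definition G1 :: "'a::comm_ring_1 poly poly poly" where
  "G1 = varX^2 * varZ^2 + varY^2 * varZ^2 - varX^2 * varY^2"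

definition G2 :: "'a::comm_ring_1 poly poly poly" where
  "G2 = varY^2 * varZ^2 + varX^2 * varZ^2 + varX^2 * varY^2
        - 2 * varX * varY * varZ * (varX + varY + varZ)"

definition G3 :: "'a::comm_ring_1 poly poly poly" where
  "G3 = varX^6 + varY^6 + varZ^6
        - 2 * (varX^3 * varY^3 + varX^3 * varZ^3 + varY^3 * varZ^3)"

definition G4 :: "'a::comm_ring_1 poly poly poly" where
  "G4 = (varX^2 + varY^2 - varZ^2)^3 + 27 * varX^2 * varY^2 * varZ^2"

end

theory Submission
  imports Defs
begin

text \<open>\<open>G1\<close> and \<open>G2\<close> are quadratic in \<open>Z\<close> over \<open>K[X,Y]\<close>, primitive, and their discriminants,
  viewed as polynomials in \<open>Y\<close> over \<open>K[X]\<close>, have a root of odd multiplicity, so they are not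
  squares and the quadratics do not factor.

  For \<open>G3\<close> and \<open>G4\<close> substitute \<open>X \<mapsto> X\<^sup>n, Y \<mapsto> Y\<^sup>n\<close> with \<open>n = 2\<close> resp. \<open>n = 3\<close>: then
  \<open>G3(X\<^sup>2, Y\<^sup>2, Z) = (Z\<^sup>3 - (X\<^sup>3 + Y\<^sup>3)\<^sup>2) (Z\<^sup>3 - (X\<^sup>3 - Y\<^sup>3)\<^sup>2)\<close> and
  \<open>G4(X\<^sup>3, Y\<^sup>3, Z) = - \<Prod>\<^sub>w (Z\<^sup>2 - (X\<^sup>2 + w Y\<^sup>2)\<^sup>3)\<close> over the cube roots of unity \<open>w\<close>.
  Each factor \<open>Z\<^sup>k - W\<close> is prime, because \<open>W\<close> has, as a polynomial in \<open>Y\<close>, a root whose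
  multiplicity is prime to \<open>k\<close>. A nontrivial factorisation of \<open>G3\<close> or \<open>G4\<close> would make one of
  these primes, up to a unit, a polynomial in \<open>X\<^sup>n\<close> and \<open>Y\<^sup>n\<close>, which none of them is.\<close>

section \<open>Ring homomorphisms\<close>

locale comm_ring_hom =
  fixes f :: "'a::comm_ring_1 \<Rightarrow> 'b::comm_ring_1"
  assumes hom_add: "f (x + y) = f x + f y"
    and hom_mult: "f (x * y) = f x * f y"
    and hom_one: "f 1 = 1"
begin

lemma hom_zero: "f 0 = 0"
  using hom_add[of 0 0] by simp

lemma hom_uminus: "f (- x) = - f x"
  using hom_add[of x "- x"] by (simp add: hom_zero add_eq_0_iff)

lemma hom_diff: "f (x - y) = f x - f y"
  using hom_add[of x "- y"] by (simp add: hom_uminus)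

lemma hom_of_nat: "f (of_nat n) = of_nat n"
  by (induction n) (simp_all add: hom_zero hom_add hom_one)

lemma hom_numeral: "f (numeral n) = numeral n"
  using hom_of_nat[of "numeral n"] by simp

lemma hom_power: "f (x ^ n) = f x ^ n"
  by (induction n) (simp_all add: hom_one hom_mult)

lemma hom_sum: "f (sum g A) = (\<Sum>i\<in>A. f (g i))"
  by (induction A rule: infinite_finite_induct) (simp_all add: hom_zero hom_add)

lemmas hom_ring_ops = hom_add hom_mult hom_uminus hom_diff hom_numeral hom_power

end

lemma comm_ring_hom_comp: "comm_ring_hom f \<Longrightarrow> comm_ring_hom g \<Longrightarrow> comm_ring_hom (f \<circ> g)"
  by (simp add: comm_ring_hom_def)

lemma comm_ring_hom_map_poly:
  assumes "comm_ring_hom f"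
  shows "comm_ring_hom (map_poly f)"
proof -
  interpret f: comm_ring_hom f by fact
  show ?thesis
    by unfold_locales
      (simp_all add: poly_eq_iff coeff_map_poly coeff_mult f.hom_zero f.hom_add f.hom_mult
        f.hom_sum f.hom_one)
qed

lemma comm_ring_hom_pcompose: "comm_ring_hom (\<lambda>p. pcompose p q)"
  by unfold_locales (simp_all add: pcompose_add pcompose_mult pcompose_1)

interpretation const_poly: comm_ring_hom "\<lambda>c::'a::comm_ring_1. [:c:]"
  by unfold_locales (simp_all add: one_pCons)

section \<open>Substituting powers of \<open>X\<close> and \<open>Y\<close>\<close>

lemma coeff_pcompose_monom:
  fixes p :: "'a::comm_ring_1 poly"
  assumes "n > 0"
  shows "coeff (pcompose p (monom 1 n)) j = (if n dvd j then coeff p (j div n) else 0)"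
proof (induction p arbitrary: j)
  case (pCons a p)
  have "coeff (pcompose (pCons a p) (monom 1 n)) j =
        (if j = 0 then a else if j < n then 0 else coeff (pcompose p (monom 1 n)) (j - n))"
    using assms by (simp add: pcompose_pCons coeff_monom_mult coeff_pCons split: nat.split)
  also have "\<dots> = (if n dvd j then coeff (pCons a p) (j div n) else 0)"
  proof (cases "j < n")
    case True
    then show ?thesis by (auto dest: dvd_imp_le)
  next
    case False
    then obtain m where m: "j = n + m" by (metis le_add_diff_inverse not_less)
    then show ?thesis using assms pCons.IH by (simp add: coeff_pCons)
  qed
  finally show ?case .
qed simp

text \<open>\<open>pow_subst3 n F\<close> is \<open>F(X\<^sup>n, Y\<^sup>n, Z)\<close>; the three functions substitute
  in \<open>K[X]\<close>, \<open>K[X][Y]\<close> and \<open>K[X][Y][Z]\<close> respectively.\<close>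

definition pow_subst1 :: "nat \<Rightarrow> 'a::comm_ring_1 poly \<Rightarrow> 'a poly" where
  "pow_subst1 n d = pcompose d (monom 1 n)"

definition pow_subst2 :: "nat \<Rightarrow> 'a::comm_ring_1 poly poly \<Rightarrow> 'a poly poly" where
  "pow_subst2 n c = pcompose (map_poly (pow_subst1 n) c) (monom 1 n)"

definition pow_subst3 :: "nat \<Rightarrow> 'a::comm_ring_1 poly poly poly \<Rightarrow> 'a poly poly poly" where
  "pow_subst3 n = map_poly (pow_subst2 n)"

lemma comm_ring_hom_pow_subst1: "comm_ring_hom (pow_subst1 n)"
  unfolding pow_subst1_def by (rule comm_ring_hom_pcompose)

lemma comm_ring_hom_pow_subst2: "comm_ring_hom (pow_subst2 n)"
proof -
  have "pow_subst2 n = (\<lambda>p. pcompose p (monom 1 n)) \<circ> map_poly (pow_subst1 n)"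
    by (simp add: fun_eq_iff pow_subst2_def)
  then show ?thesis
    by (metis comm_ring_hom_comp comm_ring_hom_pcompose comm_ring_hom_map_poly
        comm_ring_hom_pow_subst1)
qed

lemma comm_ring_hom_pow_subst3: "comm_ring_hom (pow_subst3 n)"
  unfolding pow_subst3_def by (rule comm_ring_hom_map_poly[OF comm_ring_hom_pow_subst2])

interpretation pow_subst1: comm_ring_hom "pow_subst1 n" by (rule comm_ring_hom_pow_subst1)
interpretation pow_subst2: comm_ring_hom "pow_subst2 n" by (rule comm_ring_hom_pow_subst2)
interpretation pow_subst3: comm_ring_hom "pow_subst3 n" by (rule comm_ring_hom_pow_subst3)

lemma coeff_pow_subst3: "coeff (pow_subst3 n F) k = pow_subst2 n (coeff F k)"
  by (simp add: pow_subst3_def coeff_map_poly pow_subst2.hom_zero)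

lemma coeff_pow_subst2_nonzero_dvd:
  assumes "n > 0" and "coeff (coeff (pow_subst2 n c) j) i \<noteq> 0"
  shows "n dvd j \<and> n dvd i"
proof -
  have "coeff (pow_subst2 n c) j = (if n dvd j then pow_subst1 n (coeff c (j div n)) else 0)"
    using assms(1) by (simp add: pow_subst2_def coeff_pcompose_monom coeff_map_poly pow_subst1.hom_zero)
  with assms show ?thesis
    by (auto simp: pow_subst1_def coeff_pcompose_monom split: if_splits)
qed

lemma pow_subst2_const: "pow_subst2 n [:[:k:]:] = [:[:k:]:]"
  by (simp add: pow_subst2_def pow_subst1_def map_poly_pCons pow_subst1.hom_zero)

lemma pow_subst3_varX: "pow_subst3 n varX = varX ^ n"
  by (simp add: pow_subst3_def pow_subst2_def pow_subst1_def varX_def map_poly_pCons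
      pow_subst2.hom_zero pow_subst1.hom_zero poly_const_pow monom_altdef pcompose_pCons)

lemma pow_subst3_varY: "pow_subst3 n varY = varY ^ n"
  by (simp add: pow_subst3_def pow_subst2_def pow_subst1_def varY_def map_poly_pCons
      pow_subst2.hom_zero pow_subst1.hom_zero pow_subst1.hom_one poly_const_pow monom_altdef
      pcompose_pCons pcompose_1)

lemma pow_subst3_varZ: "pow_subst3 n varZ = varZ"
  by (simp add: pow_subst3_def varZ_def map_poly_pCons pow_subst2.hom_zero pow_subst2.hom_one)

lemma pow_subst3_unit_lead_coeff:
  fixes H :: "'a::field poly poly poly"
  assumes "is_unit (lead_coeff H)"
  shows "degree (pow_subst3 n H) = degree H" and "lead_coeff (pow_subst3 n H) = lead_coeff H"
proof -
  obtain k where k: "lead_coeff H = [:[:k:]:]" "k \<noteq> 0"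
    using assms by (force simp: is_unit_poly_iff)
  then show degree: "degree (pow_subst3 n H) = degree H"
    unfolding pow_subst3_def by (intro map_poly_degree_eq) (simp add: pow_subst2_const)
  show "lead_coeff (pow_subst3 n H) = lead_coeff H"
    by (simp add: degree coeff_pow_subst3 k pow_subst2_const)
qed

lemma irreducible_pow_subst3I:
  fixes F :: "'a::field poly poly poly"
  assumes lead: "is_unit (lead_coeff F)" and deg: "degree F > 0"
    and no_split: "\<And>A B. pow_subst3 n A * pow_subst3 n B = pow_subst3 n F \<Longrightarrow>
                     is_unit (pow_subst3 n A) \<or> is_unit (pow_subst3 n B)"
  shows "irreducible F"
proof (rule irreducibleI)
  show "F \<noteq> 0" "\<not> is_unit F" using deg by (auto simp: is_unit_poly_iff)
  fix A B assume F: "F = A * B"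
  have unit_iff: "is_unit H \<longleftrightarrow> degree H = 0" if "is_unit (lead_coeff H)"
    for H :: "'a poly poly poly"
    using that by (metis degree_0_id is_unit_const_poly_iff is_unit_poly_iff degree_pCons_0)
  have "is_unit (lead_coeff A)" "is_unit (lead_coeff B)"
    using lead by (simp_all add: F lead_coeff_mult is_unit_mult_iff)
  moreover from this have "is_unit (lead_coeff (pow_subst3 n A))" "is_unit (lead_coeff (pow_subst3 n B))"
    by (metis pow_subst3_unit_lead_coeff(2))+
  moreover have "is_unit (pow_subst3 n A) \<or> is_unit (pow_subst3 n B)"
    by (rule no_split) (simp add: F pow_subst3.hom_mult)
  ultimately show "is_unit A \<or> is_unit B"
    by (simp add: unit_iff pow_subst3_unit_lead_coeff)
qed

section \<open>Factors of products of primes\<close>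

lemma associated_factor_of_two_primes:
  fixes F G P Q :: "'a::{idom,algebraic_semidom}"
  assumes P: "prime_elem P" and Q: "prime_elem Q" and eq: "F * G = P * Q"
    and "\<not> is_unit F" "\<not> is_unit G"
  shows "\<exists>c. is_unit c \<and> (F = P * c \<or> G = P * c)"
proof -
  have step: "\<exists>c. is_unit c \<and> F = P * c"
    if "F * G = P * Q" "P dvd F" "\<not> is_unit G" for F G
  proof -
    obtain c where F: "F = P * c" using \<open>P dvd F\<close> by blast
    with that(1) P have "c * G = Q" by (simp add: mult.assoc prime_elem_def)
    then have "is_unit c" using Q \<open>\<not> is_unit G\<close> by (metis irreducibleD prime_elem_imp_irreducible)
    with F show ?thesis by blast
  qed
  have "P dvd F \<or> P dvd G" using P eq by (metis dvd_triv_left prime_elem_dvd_mult_iff)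
  then show ?thesis using step[OF eq] step[of G F] eq assms(4,5) by (auto simp: mult.commute)
qed

lemma associated_factor_of_three_primes:
  fixes F G P Q S :: "'a::{idom,algebraic_semidom}"
  assumes P: "prime_elem P" and Q: "prime_elem Q" and S: "prime_elem S"
    and eq: "F * G = P * Q * S" and nF: "\<not> is_unit F" and nG: "\<not> is_unit G"
  shows "\<exists>R\<in>{P, Q, S}. \<exists>c. is_unit c \<and> (F = R * c \<or> G = R * c)"
proof -
  have step: "\<exists>R\<in>{P, Q, S}. \<exists>c. is_unit c \<and> (F = R * c \<or> G = R * c)"
    if eq: "F * G = P * Q * S" and "P dvd F" "\<not> is_unit G" for F G
  proof -
    obtain f where F: "F = P * f" using \<open>P dvd F\<close> by blast
    with eq P have fG: "f * G = Q * S" by (simp add: mult.assoc prime_elem_def)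
    show ?thesis
    proof (cases "is_unit f")
      case True
      then show ?thesis using F by blast
    next
      case False
      from associated_factor_of_two_primes[OF Q S fG False \<open>\<not> is_unit G\<close>]
      obtain c where c: "is_unit c" "f = Q * c \<or> G = Q * c" by blast
      moreover have "\<exists>d. is_unit d \<and> G = S * d" if "f = Q * c"
      proof -
        have "c * G = S" using fG that Q by (simp add: mult.assoc prime_elem_def)
        moreover obtain d where "1 = c * d" using c(1) by (rule dvdE)
        ultimately have "G = S * d" by (metis mult.assoc mult.commute mult_1)
        then show ?thesis using \<open>1 = c * d\<close> by (metis dvd_triv_right)
      qed
      ultimately show ?thesis by blast
    qed
  qed
  have "P dvd F \<or> P dvd G" using P eq by (metis dvd_triv_left mult.assoc prime_elem_dvd_mult_iff)
  then show ?thesis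
    using step[OF eq _ nG] step[of G F] eq nF by (auto simp: mult.commute)
qed

section \<open>Quadratics and binomials \<open>Z\<^sup>k - W\<close> over a domain\<close>

lemma poly_eq_if_degree_le_1: "degree p \<le> 1 \<Longrightarrow> p = [:coeff p 0, coeff p 1:]"
  by (rule poly_eqI) (auto simp: coeff_pCons coeff_eq_0 split: nat.split)

lemma poly_eq_if_degree_le_2: "degree p \<le> 2 \<Longrightarrow> p = [:coeff p 0, coeff p 1, coeff p 2:]"
  by (rule poly_eqI) (auto simp: coeff_pCons coeff_eq_0 numeral_2_eq_2 split: nat.split)

lemma degree_cofactor:
  fixes C D E k :: "'a::idom poly"
  assumes "D * E = C * k" "D \<noteq> 0" "E \<noteq> 0"
  shows "degree C + degree k = degree D + degree E"
proof -
  have "C \<noteq> 0" "k \<noteq> 0" using assms by auto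
  then show ?thesis using assms by (metis degree_mult_eq)
qed

lemma is_unit_if_dvd_monic_and_const:
  fixes a p q :: "'a::idom_divide poly"
  assumes "a dvd p" "a dvd q" "q \<noteq> 0" "degree q = 0" "lead_coeff p = 1"
  shows "is_unit a"
proof -
  have "degree a = 0" using assms(2-4) by (metis degree_0 dvd_imp_degree_le le_zero_eq)
  then obtain c where a: "a = [:c:]" by (metis degree_0_id)
  obtain m where "p = a * m" using assms(1) by blast
  then have "lead_coeff p = lead_coeff a * lead_coeff m" by (simp only: lead_coeff_mult)
  then have "c * lead_coeff m = 1" using assms(5) by (simp add: a)
  then show ?thesis by (metis a dvd_triv_left is_unit_const_poly_iff)
qed

lemma order_power: "p \<noteq> 0 \<Longrightarrow> order r (p ^ n) = n * order r p"
  for p :: "'a::idom poly"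
  by (induction n) (simp_all add: order_mult)

lemma order_linear_power_mult:
  fixes q :: "'a::idom poly"
  assumes "poly q r \<noteq> 0"
  shows "order r ([:-r, 1:] ^ n * q) = n"
proof -
  have "q \<noteq> 0" using assms by auto
  then show ?thesis by (simp add: order_mult order_power_n_n order_0I[OF assms])
qed

lemma not_square_linear_power_mult:
  fixes q :: "'a::idom poly"
  assumes "odd n" "poly q r \<noteq> 0"
  shows "s * s \<noteq> [:-r, 1:] ^ n * q"
proof
  assume sq: "s * s = [:-r, 1:] ^ n * q"
  have "q \<noteq> 0" using assms(2) by auto
  with sq have "s \<noteq> 0" by auto
  then have "order r (s * s) = 2 * order r s" by (simp add: order_mult)
  with sq order_linear_power_mult[OF assms(2)] assms(1) show False by simp
qed

lemma irreducible_quadratic: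
  fixes c0 c1 c2 :: "'a::{idom_divide,algebraic_semidom}"
  assumes c2: "c2 \<noteq> 0"
    and primitive: "\<And>a. a dvd c0 \<Longrightarrow> a dvd c1 \<Longrightarrow> a dvd c2 \<Longrightarrow> is_unit a"
    and not_square: "\<And>s. s * s \<noteq> c1 * c1 - 4 * c2 * c0"
  shows "irreducible [:c0, c1, c2:]"
proof (rule irreducibleI)
  let ?F = "[:c0, c1, c2:]"
  show "?F \<noteq> 0" using c2 by simp
  show "\<not> is_unit ?F" using c2 by (simp add: is_unit_poly_iff)
  fix A B assume F: "?F = A * B"
  have const_factor_unit: "is_unit H" if "degree H = 0" "H dvd ?F" for H
  proof -
    have H: "H = [:coeff H 0:]" using degree_0_id[OF that(1)] by simp
    with that(2) have "\<forall>n. coeff H 0 dvd coeff ?F n" by (metis const_poly_dvd_iff)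
    then have "coeff H 0 dvd c0" "coeff H 0 dvd c1" "coeff H 0 dvd c2"
      by (auto dest: spec[of _ 0] spec[of _ 1] spec[of _ 2] simp: numeral_2_eq_2)
    then show ?thesis by (subst H) (simp add: is_unit_const_poly_iff primitive)
  qed
  show "is_unit A \<or> is_unit B"
  proof (cases "degree A = 0 \<or> degree B = 0")
    case True
    then show ?thesis using const_factor_unit F by (metis dvd_triv_left dvd_triv_right)
  next
    case False
    have "A \<noteq> 0" "B \<noteq> 0" using F c2 by auto
    then have "degree A + degree B = degree ?F" by (simp add: F degree_mult_eq)
    then have "degree A + degree B = 2" using c2 by simp
    with False have "degree A \<le> 1" "degree B \<le> 1" by auto
    then have "A = [:coeff A 0, coeff A 1:]" "B = [:coeff B 0, coeff B 1:]"
      by (simp_all only: poly_eq_if_degree_le_1)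
    then have "?F = [:coeff A 0, coeff A 1:] * [:coeff B 0, coeff B 1:]" using F by simp
    then have "c1 * c1 - 4 * c2 * c0 =
        (coeff A 0 * coeff B 1 - coeff A 1 * coeff B 0) * (coeff A 0 * coeff B 1 - coeff A 1 * coeff B 0)"
      by (simp add: algebra_simps)
    then show ?thesis using not_square by metis
  qed
qed

lemma prime_elem_monicI:
  fixes C :: "'a::idom_divide poly"
  assumes monic: "lead_coeff C = 1" and "degree C > 0"
    and no_zero_divisors: "\<And>D E. D \<noteq> 0 \<Longrightarrow> E \<noteq> 0 \<Longrightarrow> degree D < degree C \<Longrightarrow>
                             degree E < degree C \<Longrightarrow> \<not> C dvd D * E"
  shows "prime_elem C"
proof (rule prime_elemI)
  show C0: "C \<noteq> 0" using monic by auto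
  show "\<not> is_unit C" using \<open>degree C > 0\<close> by (auto simp: is_unit_poly_iff)
  have reduce: "\<exists>q r. D = C * q + r \<and> (r = 0 \<or> degree r < degree C)" for D
  proof -
    obtain q r where "pseudo_divmod D C = (q, r)" by fastforce
    from pseudo_divmod[OF C0 this] monic show ?thesis by auto
  qed
  fix D E assume dvd: "C dvd D * E"
  obtain q1 r1 where D: "D = C * q1 + r1" and r1: "r1 = 0 \<or> degree r1 < degree C"
    using reduce by blast
  obtain q2 r2 where E: "E = C * q2 + r2" and r2: "r2 = 0 \<or> degree r2 < degree C"
    using reduce by blast
  have "D * E = C * (q1 * C * q2 + q1 * r2 + r1 * q2) + r1 * r2"
    by (simp add: D E algebra_simps)
  with dvd have "C dvd r1 * r2" by (metis dvd_add_right_iff dvd_triv_left)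
  then have "r1 = 0 \<or> r2 = 0" using no_zero_divisors r1 r2 by blast
  then show "C dvd D \<or> C dvd E" by (auto simp: D E)
qed

lemma prime_elem_X2_minus:
  fixes W :: "'a::idom_divide poly"
  assumes W: "W \<noteq> 0" "odd (order r W)"
  shows "prime_elem [:-W, 0, 1:]"
proof (rule prime_elem_monicI)
  let ?C = "[:-W, 0, 1:]"
  show "lead_coeff ?C = 1" "degree ?C > 0" by simp_all
  fix D E :: "'a poly poly" assume D: "D \<noteq> 0" and E: "E \<noteq> 0" and "degree D < degree ?C" "degree E < degree ?C"
  then have "degree D \<le> 1" "degree E \<le> 1" by simp_all
  then obtain p0 p1 q0 q1 :: "'a poly" where D01: "D = [:p0, p1:]" and E01: "E = [:q0, q1:]"
    using poly_eq_if_degree_le_1 by metis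
  show "\<not> ?C dvd D * E"
  proof
    assume "?C dvd D * E"
    then obtain k where k: "D * E = ?C * k" by blast
    have "degree ?C + degree k = degree D + degree E" using k D E by (rule degree_cofactor)
    then have "[:coeff k 0:] = k" using \<open>degree D \<le> 1\<close> \<open>degree E \<le> 1\<close> by (intro degree_0_id) simp
    with k have "[:p0, p1:] * [:q0, q1:] = ?C * [:coeff k 0:]" by (simp add: D01 E01)
    then have "p0 * q0 + W * (p1 * q1) = 0" "p0 * q1 + p1 * q0 = 0"
      by (simp_all add: algebra_simps)
    moreover have "\<And>a b c d w :: 'a poly. a * c + w * (b * d) = 0 \<Longrightarrow> a * d + b * c = 0 \<Longrightarrow>
        (a * a - w * (b * b)) * c = 0 \<and> (a * a - w * (b * b)) * d = 0"
      by algebra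
    ultimately have "(p0 * p0 - W * (p1 * p1)) * q0 = 0" "(p0 * p0 - W * (p1 * p1)) * q1 = 0"
      by blast+
    with E have norm: "p0 * p0 = W * (p1 * p1)" by (auto simp: E01)
    with D W(1) have "p0 \<noteq> 0" "p1 \<noteq> 0" by (auto simp: D01)
    then have "order r (p0 * p0) = order r (W * (p1 * p1))"
      and "order r (W * (p1 * p1)) = order r W + 2 * order r p1"
      using norm W(1) by (simp_all add: order_mult)
    with W(2) \<open>p0 \<noteq> 0\<close> show False by (simp add: order_mult) presburger
  qed
qed

lemma linear_power_not_dvd_sum:
  fixes T :: "nat \<Rightarrow> 'a::idom poly"
  assumes "finite I" "m \<in> I" "T m \<noteq> 0"
    and above: "\<And>j. j \<in> I \<Longrightarrow> j \<noteq> m \<Longrightarrow> T j = 0 \<or> order r (T m) < order r (T j)"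
  shows "\<not> [:-r, 1:] ^ Suc (order r (T m)) dvd (\<Sum>i\<in>I. T i)"
proof
  let ?D = "[:-r, 1:] ^ Suc (order r (T m))"
  assume "?D dvd (\<Sum>i\<in>I. T i)"
  moreover have "?D dvd (\<Sum>i\<in>I - {m}. T i)"
    using above by (intro dvd_sum) (auto simp only: order_divides Suc_le_eq)
  ultimately have "?D dvd T m"
    using sum.remove[OF assms(1,2), of T] by (metis add_diff_cancel_right' dvd_diff)
  with order_2[OF assms(3)] show False by blast
qed

lemma order_power_mult_cube_neq:
  fixes W p q :: "'a::idom poly"
  assumes "W \<noteq> 0" "\<not> 3 dvd order r W" "p \<noteq> 0" "q \<noteq> 0" "i < 3" "j < 3" "i \<noteq> j"
  shows "order r (W ^ i * p ^ 3) \<noteq> order r (W ^ j * q ^ 3)"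
proof -
  have "i * w + 3 * a \<noteq> j * w + 3 * b" if "\<not> 3 dvd w" for w a b :: nat
    using that assms(5-7) by (auto simp: less_Suc_eq numeral_3_eq_3) presburger+
  with assms(1-4) show ?thesis by (simp add: order_mult order_power)
qed

lemma cubic_norm_form_eq_0:
  fixes W p0 p1 p2 :: "'a::idom poly"
  assumes W: "W \<noteq> 0" "\<not> 3 dvd order r W" and three: "(3::'a) \<noteq> 0"
    and norm: "p0 ^ 3 + W * p1 ^ 3 + W\<^sup>2 * p2 ^ 3 = 3 * W * p0 * p1 * p2"
  shows "p0 = 0 \<and> p1 = 0 \<and> p2 = 0"
proof (rule ccontr)
  define P where "P = (!) [p0, p1, p2]"
  define T where "T i = W ^ i * P i ^ 3" for i
  define v where "v i = order r (T i)" for i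
  have P012: "P 0 = p0" "P 1 = p1" "P 2 = p2" by (simp_all add: P_def numeral_2_eq_2)
  have less_3: "i < 3 \<longleftrightarrow> i = 0 \<or> i = 1 \<or> i = 2" for i :: nat by auto
  assume "\<not> (p0 = 0 \<and> p1 = 0 \<and> p2 = 0)"
  then have "\<exists>i. i < 3 \<and> P i \<noteq> 0" by (metis P012 less_3)
  then obtain m where m: "m < 3" "P m \<noteq> 0"
    and least: "\<And>j. j < 3 \<Longrightarrow> P j \<noteq> 0 \<Longrightarrow> v m \<le> v j"
    using ex_has_least_nat[of "\<lambda>i. i < 3 \<and> P i \<noteq> 0" _ v] by blast
  have T_eq_0_iff: "T i = 0 \<longleftrightarrow> P i = 0" for i by (simp add: T_def W)
  have v: "v i = i * order r W + 3 * order r (P i)" if "P i \<noteq> 0" for i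
    using that W(1) by (simp add: v_def T_def order_mult order_power)
  have v_inj: "v i \<noteq> v j" if "i < 3" "j < 3" "i \<noteq> j" "P i \<noteq> 0" "P j \<noteq> 0" for i j
    using order_power_mult_cube_neq[OF W that(4,5,1-3)] by (simp add: v_def T_def)
  have above: "T j = 0 \<or> v m < v j" if "j < 3" "j \<noteq> m" for j
  proof (cases "P j = 0")
    case False
    then show ?thesis using least[OF that(1) False] v_inj[OF m(1) that(1) _ m(2) False] that(2)
      by auto
  qed (simp add: T_eq_0_iff)
  have "\<not> [:-r, 1:] ^ Suc (v m) dvd (\<Sum>i<3. T i)"
    unfolding v_def using m above by (intro linear_power_not_dvd_sum) (auto simp: T_eq_0_iff v_def)
  moreover have "(\<Sum>i<3. T i) = 3 * W * p0 * p1 * p2"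
    using norm by (simp add: T_def P_def eval_nat_numeral)
  moreover have "[:-r, 1:] ^ Suc (v m) dvd 3 * W * p0 * p1 * p2"
  proof (cases "p0 = 0 \<or> p1 = 0 \<or> p2 = 0")
    case False
    then have P: "P i \<noteq> 0" if "i < 3" for i
      using that by (auto simp: P_def less_3)
    have gt: "v m < v j" if "j < 3" "j \<noteq> m" for j
      using above[OF that] P[OF that(1)] T_eq_0_iff by blast
    \<comment> \<open>the order of the right-hand side is the mean of the distinct orders \<open>v 0, v 1, v 2\<close>,
      hence exceeds their minimum \<open>v m\<close>\<close>
    have "3 * v m < v 0 + v 1 + v 2"
      using m(1) gt[of 0] gt[of 1] gt[of 2] by (auto simp: less_Suc_eq numeral_3_eq_3 numeral_2_eq_2)
    moreover have "v 0 + v 1 + v 2 = 3 * (order r W + order r p0 + order r p1 + order r p2)"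
      using v[of 0] v[of 1] v[of 2] False by (simp add: P_def)
    moreover have "order r (3 * W * p0 * p1 * p2) = order r W + order r p0 + order r p1 + order r p2"
      using False W(1) three by (simp add: order_mult order_smult numeral_poly)
    ultimately have "v m < order r (3 * W * p0 * p1 * p2)" by simp
    then show ?thesis unfolding order_divides by simp
  qed auto
  ultimately show False by simp
qed

lemma prime_elem_X3_minus:
  fixes W :: "'a::idom_divide poly"
  assumes W: "W \<noteq> 0" "\<not> 3 dvd order r W" and three: "(3::'a) \<noteq> 0"
  shows "prime_elem [:-W, 0, 0, 1:]"
proof (rule prime_elem_monicI)
  let ?C = "[:-W, 0, 0, 1:]"
  show "lead_coeff ?C = 1" "degree ?C > 0" by simp_all
  fix D E :: "'a poly poly" assume D: "D \<noteq> 0" and E: "E \<noteq> 0" and "degree D < degree ?C" "degree E < degree ?C"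
  then have "degree D \<le> 2" "degree E \<le> 2" by simp_all
  then obtain p0 p1 p2 q0 q1 q2 :: "'a poly" where D012: "D = [:p0, p1, p2:]" and E012: "E = [:q0, q1, q2:]"
    using poly_eq_if_degree_le_2 by metis
  show "\<not> ?C dvd D * E"
  proof
    assume "?C dvd D * E"
    then obtain k where k: "D * E = ?C * k" by blast
    have "degree ?C + degree k = degree D + degree E" using k D E by (rule degree_cofactor)
    then have "[:coeff k 0, coeff k 1:] = k" using \<open>degree D \<le> 2\<close> \<open>degree E \<le> 2\<close>
      by (intro poly_eq_if_degree_le_1[symmetric]) simp
    with k have "[:p0, p1, p2:] * [:q0, q1, q2:] = ?C * [:coeff k 0, coeff k 1:]" by (simp add: D012 E012)
    then have "p0 * q0 + W * (p1 * q2 + p2 * q1) = 0" "p0 * q1 + p1 * q0 + W * (p2 * q2) = 0"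
      "p0 * q2 + p1 * q1 + p2 * q0 = 0"
      by (simp_all add: algebra_simps)
    \<comment> \<open>these say that multiplication by \<open>D\<close> on \<open>K[Z]/(Z\<^sup>3 - W)\<close> kills \<open>E\<close>;
      multiplying by the adjugate matrix gives \<open>norm D \<cdot> E = 0\<close>\<close>
    moreover have "\<And>a b c x y z w :: 'a poly.
        a * x + w * (b * z + c * y) = 0 \<Longrightarrow> a * y + b * x + w * (c * z) = 0 \<Longrightarrow>
        a * z + b * y + c * x = 0 \<Longrightarrow>
        (a ^ 3 + w * b ^ 3 + w\<^sup>2 * c ^ 3 - 3 * w * a * b * c) * x = 0 \<and>
        (a ^ 3 + w * b ^ 3 + w\<^sup>2 * c ^ 3 - 3 * w * a * b * c) * y = 0 \<and>
        (a ^ 3 + w * b ^ 3 + w\<^sup>2 * c ^ 3 - 3 * w * a * b * c) * z = 0"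
      by algebra
    ultimately have "(p0 ^ 3 + W * p1 ^ 3 + W\<^sup>2 * p2 ^ 3 - 3 * W * p0 * p1 * p2) * q = 0"
      if "q \<in> {q0, q1, q2}" for q
      using that by blast
    with E have "p0 ^ 3 + W * p1 ^ 3 + W\<^sup>2 * p2 ^ 3 = 3 * W * p0 * p1 * p2"
      by (auto simp: E012)
    with D show False using cubic_norm_form_eq_0[OF W three] by (simp add: D012)
  qed
qed

section \<open>The four curves\<close>

text \<open>\<open>varX2\<close> and \<open>varY2\<close> are \<open>X\<close> and \<open>Y\<close> in \<open>K[X][Y]\<close>, the coefficient ring of \<open>K[X][Y][Z]\<close>.\<close>

definition varX2 :: "'a::comm_ring_1 poly poly" where
  "varX2 = [:[:0, 1:]:]"

definition varY2 :: "'a::comm_ring_1 poly poly" where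
  "varY2 = [:0, 1:]"

lemma varX_conv: "varX = [:varX2:]"
  by (simp add: varX_def varX2_def)

lemma varY_conv: "varY = [:varY2:]"
  by (simp add: varY_def varY2_def)

lemma pCons3_conv_varZ: "[:c0, c1, c2:] = [:c0:] + [:c1:] * varZ + [:c2:] * varZ\<^sup>2"
  by (simp add: varZ_def power2_eq_square)

lemma pCons7_conv_varZ:
  "[:c0, c1, c2, c3, c4, c5, c6:] = [:c0:] + [:c1:] * varZ + [:c2:] * varZ ^ 2 + [:c3:] * varZ ^ 3
     + [:c4:] * varZ ^ 4 + [:c5:] * varZ ^ 5 + [:c6:] * varZ ^ 6"
  by (simp add: varZ_def eval_nat_numeral)

lemmas expand_const_poly = const_poly.hom_ring_ops const_poly.hom_zero const_poly.hom_one
  varX_conv[symmetric] varY_conv[symmetric]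

lemma G1_conv_poly_Z:
  "(G1 :: 'a::comm_ring_1 poly poly poly) = [:- (varX2\<^sup>2 * varY2\<^sup>2), 0, varX2\<^sup>2 + varY2\<^sup>2:]"
  unfolding pCons3_conv_varZ G1_def by (simp only: expand_const_poly) (simp add: algebra_simps eval_nat_numeral)

lemma G2_conv_poly_Z:
  "(G2 :: 'a::comm_ring_1 poly poly poly) =
     [:varX2\<^sup>2 * varY2\<^sup>2, - 2 * varX2 * varY2 * (varX2 + varY2), (varX2 - varY2)\<^sup>2:]"
  unfolding pCons3_conv_varZ G2_def by (simp only: expand_const_poly) (simp add: algebra_simps eval_nat_numeral)

lemma G3_conv_poly_Z:
  "(G3 :: 'a::comm_ring_1 poly poly poly) =
     [:(varX2 ^ 3 - varY2 ^ 3)\<^sup>2, 0, 0, - 2 * (varX2 ^ 3 + varY2 ^ 3), 0, 0, 1:]"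
  unfolding pCons7_conv_varZ G3_def by (simp only: expand_const_poly) (simp add: algebra_simps eval_nat_numeral)

lemma G4_conv_poly_Z:
  "(G4 :: 'a::comm_ring_1 poly poly poly) =
     [:(varX2\<^sup>2 + varY2\<^sup>2) ^ 3, 0, - 3 * (varX2\<^sup>2 + varY2\<^sup>2)\<^sup>2 + 27 * varX2\<^sup>2 * varY2\<^sup>2, 0,
       3 * (varX2\<^sup>2 + varY2\<^sup>2), 0, - 1:]"
  unfolding pCons7_conv_varZ G4_def by (simp only: expand_const_poly) (simp add: algebra_simps eval_nat_numeral)

lemma G1_irreducible:
  fixes i :: "'a::field"
  assumes two: "(2::'a) \<noteq> 0" and i: "i * i = -1"
  shows "irreducible (G1 :: 'a poly poly poly)"
  unfolding G1_conv_poly_Z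
proof (rule irreducible_quadratic)
  let ?c0 = "- (varX2\<^sup>2 * varY2\<^sup>2) :: 'a poly poly" and ?c2 = "varX2\<^sup>2 + varY2\<^sup>2 :: 'a poly poly"
  have c2: "?c2 = [:[:0, 0, 1:], 0, 1:]" by (simp add: varX2_def varY2_def power2_eq_square)
  then show "?c2 \<noteq> 0" by simp
  show "is_unit a" if "a dvd ?c0" "a dvd 0" "a dvd ?c2" for a
  proof (rule is_unit_if_dvd_monic_and_const[where p = ?c2 and q = "varX2 ^ 4"])
    have "varX2 ^ 4 = varX2\<^sup>2 * ?c2 + ?c0" by (simp add: algebra_simps eval_nat_numeral)
    then show "a dvd varX2 ^ 4" using that by (metis dvd_add dvd_mult)
    have x4: "(varX2 ^ 4 :: 'a poly poly) = [:[:0, 0, 0, 0, 1:]:]" by (simp add: varX2_def eval_nat_numeral)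
    show "(varX2 ^ 4 :: 'a poly poly) \<noteq> 0" "degree (varX2 ^ 4 :: 'a poly poly) = 0"
      unfolding x4 by simp_all
  qed (use that c2 in simp_all)
  \<comment> \<open>as a polynomial in \<open>Y\<close>, the discriminant has the simple root \<open>Y = i X\<close>\<close>
  define r :: "'a poly" where "r = [:0, i:]"
  define Q :: "'a poly poly" where "Q = 4 * varX2\<^sup>2 * varY2\<^sup>2 * (varY2 + [:r:])"
  have rr: "[:r:] * [:r:] = - varX2\<^sup>2" by (simp add: r_def varX2_def power2_eq_square i)
  have linear: "[:-r, 1:] = varY2 - [:r:]" by (simp add: varY2_def)
  have "\<And>X Y R :: 'a poly poly. R * R = - X\<^sup>2 \<Longrightarrow>
      0 * 0 - 4 * (X\<^sup>2 + Y\<^sup>2) * (- (X\<^sup>2 * Y\<^sup>2)) = (Y - R) * (4 * X\<^sup>2 * Y\<^sup>2 * (Y + R))"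
    by algebra
  from this[OF rr] have D: "0 * 0 - 4 * ?c2 * ?c0 = [:-r, 1:] ^ 1 * Q"
    by (simp only: power_one_right linear Q_def)
  have "(8::'a) \<noteq> 0" using two by (metis mult_eq_0_iff numeral_Bit0_eq_double mult_2)
  then have "poly Q r \<noteq> 0" using i by (auto simp: Q_def r_def varX2_def varY2_def numeral_poly)
  then show "s * s \<noteq> 0 * 0 - 4 * ?c2 * ?c0" for s
    unfolding D by (intro not_square_linear_power_mult) simp_all
qed

lemma G2_irreducible:
  assumes two: "(2::'a::field) \<noteq> 0"
  shows "irreducible (G2 :: 'a poly poly poly)"
  unfolding G2_conv_poly_Z
proof (rule irreducible_quadratic)
  let ?c0 = "varX2\<^sup>2 * varY2\<^sup>2 :: 'a poly poly" and ?c1 = "- 2 * varX2 * varY2 * (varX2 + varY2) :: 'a poly poly"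
    and ?c2 = "(varX2 - varY2)\<^sup>2 :: 'a poly poly"
  have c2: "?c2 = [:[:0, 0, 1:], [:0, -2:], 1:]" by (simp add: varX2_def varY2_def power2_eq_square)
  then show "?c2 \<noteq> 0" by simp
  show "is_unit a" if "a dvd ?c0" "a dvd ?c1" "a dvd ?c2" for a
  proof (rule is_unit_if_dvd_monic_and_const[where p = ?c2 and q = "- (varX2 ^ 4)"])
    have "\<And>X Y :: 'a poly poly. - (X ^ 4) = 3 * (X\<^sup>2 * Y\<^sup>2) + X * (- 2 * X * Y * (X + Y)) - X\<^sup>2 * (X - Y)\<^sup>2"
      by algebra
    then have "- (varX2 ^ 4) = 3 * ?c0 + varX2 * ?c1 - varX2\<^sup>2 * ?c2" .
    then show "a dvd - (varX2 ^ 4)" using that by (metis dvd_add dvd_diff dvd_mult)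
    have x4: "(- (varX2 ^ 4) :: 'a poly poly) = [:[:0, 0, 0, 0, -1:]:]" by (simp add: varX2_def eval_nat_numeral)
    show "(- (varX2 ^ 4) :: 'a poly poly) \<noteq> 0" "degree (- (varX2 ^ 4) :: 'a poly poly) = 0"
      unfolding x4 by simp_all
  qed (use that c2 in simp_all)
  \<comment> \<open>the discriminant is \<open>16 X\<^sup>3 Y\<^sup>3\<close>, with a triple root \<open>Y = 0\<close>\<close>
  define Q :: "'a poly poly" where "Q = 16 * varX2 ^ 3"
  have "\<And>X Y :: 'a poly poly.
      (- 2 * X * Y * (X + Y)) * (- 2 * X * Y * (X + Y)) - 4 * (X - Y)\<^sup>2 * (X\<^sup>2 * Y\<^sup>2) = Y ^ 3 * (16 * X ^ 3)"
    by algebra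
  then have D: "?c1 * ?c1 - 4 * ?c2 * ?c0 = [:-0, 1:] ^ 3 * Q"
    by (simp only: Q_def minus_zero flip: varY2_def)
  have "(16::'a) \<noteq> 0" using two by (metis mult_eq_0_iff numeral_Bit0_eq_double mult_2)
  then have "poly Q 0 \<noteq> 0" by (simp add: Q_def varX2_def numeral_poly)
  then show "s * s \<noteq> ?c1 * ?c1 - 4 * ?c2 * ?c0" for s
    unfolding D by (intro not_square_linear_power_mult) simp_all
qed

definition G3_factor :: "'a::comm_ring_1 \<Rightarrow> 'a poly poly poly" where
  "G3_factor e = [:- (varX2 ^ 3 + [:[:e:]:] * varY2 ^ 3)\<^sup>2, 0, 0, 1:]"

lemma G3_factor_conv: "G3_factor e = varZ ^ 3 - (varX ^ 3 + [:[:[:e:]:]:] * varY ^ 3)\<^sup>2"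
proof -
  have "[:c0, 0, 0, 1:] = [:c0:] + varZ ^ 3" for c0 :: "'a poly poly"
    by (simp add: varZ_def eval_nat_numeral)
  then show ?thesis unfolding G3_factor_def by (simp only: expand_const_poly) simp
qed

lemma prime_elem_G3_factor:
  fixes e :: "'a::field"
  assumes e: "e * e = 1" and three: "(3::'a) \<noteq> 0"
  shows "prime_elem (G3_factor e)"
proof -
  define u :: "'a poly poly" where "u = varX2 ^ 3 + [:[:e:]:] * varY2 ^ 3"
  \<comment> \<open>as a polynomial in \<open>Y\<close>, \<open>u\<close> has the simple root \<open>Y = - e X\<close>\<close>
  define r :: "'a poly" where "r = [:0, - e:]"
  define q :: "'a poly poly" where "q = [:[:e:]:] * (varY2\<^sup>2 + [:r:] * varY2 + [:r:]\<^sup>2)"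
  have factor: "\<And>X Y R E :: 'a poly poly. E * E = 1 \<Longrightarrow> R = - E * X \<Longrightarrow>
      X ^ 3 + E * Y ^ 3 = (Y - R) * (E * (Y\<^sup>2 + R * Y + R\<^sup>2))"
    by algebra
  have "[:[:e:]:] * [:[:e:]:] = (1 :: 'a poly poly)" using e by (simp add: one_pCons)
  moreover have "[:r:] = - [:[:e:]:] * varX2" by (simp add: r_def varX2_def)
  moreover have "[:-r, 1:] = varY2 - [:r:]" by (simp add: varY2_def)
  ultimately have u: "u = [:-r, 1:] ^ 1 * q"
    unfolding u_def q_def power_one_right by (simp only: factor)
  have "poly q r = [:0, 0, 3 * e ^ 3:]"
    by (simp add: q_def r_def varY2_def power2_eq_square eval_nat_numeral algebra_simps)
  moreover have "e \<noteq> 0" using e by auto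
  ultimately have "poly q r \<noteq> 0" using three by simp
  then have "order r u = 1" unfolding u by (rule order_linear_power_mult)
  moreover have "u \<noteq> 0" unfolding u mult_eq_0_iff using \<open>poly q r \<noteq> 0\<close> by auto
  ultimately have "order r (u\<^sup>2) = 2" by (simp add: order_power)
  moreover have "(3::'a poly) \<noteq> 0" using three by (simp add: numeral_poly)
  ultimately show ?thesis
    unfolding G3_factor_def u_def[symmetric] using \<open>u \<noteq> 0\<close>
    by (intro prime_elem_X3_minus[where r = r]) simp_all
qed

lemma pow_subst3_G3: "pow_subst3 2 (G3 :: 'a::idom poly poly poly) = G3_factor 1 * G3_factor (- 1)"
  unfolding G3_def G3_factor_conv
  by (simp only: pow_subst3.hom_ring_ops pow_subst3_varX pow_subst3_varY pow_subst3_varZ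
      const_poly.hom_one const_poly.hom_uminus) algebra

lemma G3_factor_neq_pow_subst3:
  fixes e :: "'a::field"
  assumes "e \<noteq> 0" "(2::'a) \<noteq> 0" "is_unit c"
  shows "pow_subst3 2 H \<noteq> G3_factor e * c"
proof
  assume eq: "pow_subst3 2 H = G3_factor e * c"
  obtain k where k: "k \<noteq> 0" "c = [:[:[:k:]:]:]" using \<open>is_unit c\<close> by (force simp: is_unit_poly_iff)
  have "pow_subst2 2 (coeff H 0) = - ((varX2 ^ 3 + [:[:e:]:] * varY2 ^ 3)\<^sup>2 * [:[:k:]:])"
    using arg_cong[OF eq, of "\<lambda>F. coeff F 0"] by (simp add: coeff_pow_subst3 k G3_factor_def)
  \<comment> \<open>the image contains the monomial \<open>X\<^sup>3 Y\<^sup>3\<close>, but \<open>pow_subst2 2\<close> produces only even exponents\<close>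
  moreover have "coeff (coeff ((varX2 ^ 3 + [:[:e:]:] * varY2 ^ 3)\<^sup>2 * [:[:k:]:]) 3) 3 = 2 * e * k"
    by (simp add: varX2_def varY2_def eval_nat_numeral algebra_simps)
  ultimately have "coeff (coeff (pow_subst2 2 (coeff H 0)) 3) 3 \<noteq> 0" using assms k by simp
  from coeff_pow_subst2_nonzero_dvd[OF _ this] show False by simp
qed

lemma G3_irreducible:
  assumes two: "(2::'a::field) \<noteq> 0" and three: "(3::'a) \<noteq> 0"
  shows "irreducible (G3 :: 'a poly poly poly)"
proof (rule irreducible_pow_subst3I[where n = 2])
  show "is_unit (lead_coeff (G3 :: 'a poly poly poly))" "degree (G3 :: 'a poly poly poly) > 0"
    unfolding G3_conv_poly_Z by simp_all
  fix A B :: "'a poly poly poly"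
  assume "pow_subst3 2 A * pow_subst3 2 B = pow_subst3 2 G3"
  then have factors: "pow_subst3 2 A * pow_subst3 2 B = G3_factor 1 * G3_factor (- 1)"
    by (simp only: pow_subst3_G3)
  show "is_unit (pow_subst3 2 A) \<or> is_unit (pow_subst3 2 B)"
  proof (rule ccontr)
    have "prime_elem (G3_factor (1::'a))" "prime_elem (G3_factor (- 1::'a))"
      using three by (simp_all add: prime_elem_G3_factor)
    moreover assume "\<not> (is_unit (pow_subst3 2 A) \<or> is_unit (pow_subst3 2 B))"
    ultimately obtain c where "is_unit c"
      and "pow_subst3 2 A = G3_factor 1 * c \<or> pow_subst3 2 B = G3_factor 1 * c"
      using associated_factor_of_two_primes[OF _ _ factors] by blast
    with two show False using G3_factor_neq_pow_subst3[of 1] by auto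
  qed
qed

definition G4_factor :: "'a::comm_ring_1 \<Rightarrow> 'a poly poly poly" where
  "G4_factor w = [:- ((varX2\<^sup>2 + [:[:w:]:] * varY2\<^sup>2) ^ 3), 0, 1:]"

lemma G4_factor_conv: "G4_factor w = varZ\<^sup>2 - (varX\<^sup>2 + [:[:[:w:]:]:] * varY\<^sup>2) ^ 3"
  unfolding G4_factor_def pCons3_conv_varZ by (simp only: expand_const_poly) simp

lemma prime_elem_G4_factor:
  fixes w \<mu> :: "'a::field"
  assumes w: "w * (\<mu> * \<mu>) = -1" and two: "(2::'a) \<noteq> 0"
  shows "prime_elem (G4_factor w)"
proof -
  define c :: "'a poly poly" where "c = varX2\<^sup>2 + [:[:w:]:] * varY2\<^sup>2"
  \<comment> \<open>as a polynomial in \<open>Y\<close>, \<open>c\<close> has the simple root \<open>Y = \<mu> X\<close>\<close>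
  define r :: "'a poly" where "r = [:0, \<mu>:]"
  define q :: "'a poly poly" where "q = [:[:w:]:] * (varY2 + [:r:])"
  have factor: "\<And>X Y R W :: 'a poly poly. W * (R * R) = - X\<^sup>2 \<Longrightarrow>
      X\<^sup>2 + W * Y\<^sup>2 = (Y - R) * (W * (Y + R))"
    by algebra
  have "[:[:w:]:] * ([:r:] * [:r:]) = - varX2\<^sup>2"
    using w by (simp add: r_def varX2_def power2_eq_square algebra_simps)
  moreover have "[:-r, 1:] = varY2 - [:r:]" by (simp add: varY2_def)
  ultimately have c: "c = [:-r, 1:] ^ 1 * q"
    unfolding c_def q_def power_one_right by (simp only: factor)
  have "poly q r = [:0, 2 * w * \<mu>:]" by (simp add: q_def r_def varY2_def)
  moreover have "w \<noteq> 0" "\<mu> \<noteq> 0" using w by auto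
  ultimately have "poly q r \<noteq> 0" using two by simp
  then have "order r c = 1" unfolding c by (rule order_linear_power_mult)
  moreover have "c \<noteq> 0" unfolding c mult_eq_0_iff using \<open>poly q r \<noteq> 0\<close> by auto
  ultimately have "order r (c ^ 3) = 3" by (simp add: order_power)
  with \<open>c \<noteq> 0\<close> show ?thesis
    unfolding G4_factor_def c_def[symmetric] by (intro prime_elem_X2_minus[where r = r]) simp_all
qed

lemma pow_subst3_G4:
  fixes \<omega> :: "'a::idom"
  assumes \<omega>: "\<omega> * \<omega> + \<omega> + 1 = 0"
  shows "pow_subst3 3 (G4 :: 'a poly poly poly) = G4_factor 1 * G4_factor \<omega> * (- G4_factor (\<omega> * \<omega>))"
proof -
  have "[:[:[:\<omega> * \<omega> + \<omega> + 1:]:]:] = (0 :: 'a poly poly poly)" using \<omega> by simp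
  then have "[:[:[:\<omega>:]:]:] * [:[:[:\<omega>:]:]:] + [:[:[:\<omega>:]:]:] + 1 = (0 :: 'a poly poly poly)"
    by (simp only: expand_const_poly)
  moreover have "\<And>X Y Z W :: 'a poly poly poly. W * W + W + 1 = 0 \<Longrightarrow>
      ((X ^ 3)\<^sup>2 + (Y ^ 3)\<^sup>2 - Z\<^sup>2) ^ 3 + 27 * (X ^ 3)\<^sup>2 * (Y ^ 3)\<^sup>2 * Z\<^sup>2 =
      (Z\<^sup>2 - (X\<^sup>2 + 1 * Y\<^sup>2) ^ 3) * (Z\<^sup>2 - (X\<^sup>2 + W * Y\<^sup>2) ^ 3) * (- (Z\<^sup>2 - (X\<^sup>2 + (W * W) * Y\<^sup>2) ^ 3))"
    by algebra
  ultimately show ?thesis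
    unfolding G4_def G4_factor_conv
    by (simp only: pow_subst3.hom_ring_ops pow_subst3_varX pow_subst3_varY pow_subst3_varZ
        const_poly.hom_one const_poly.hom_mult)
qed

lemma G4_factor_neq_pow_subst3:
  fixes w :: "'a::field"
  assumes "w \<noteq> 0" "(3::'a) \<noteq> 0" "is_unit c"
  shows "pow_subst3 3 H \<noteq> G4_factor w * c"
proof
  assume eq: "pow_subst3 3 H = G4_factor w * c"
  obtain k where k: "k \<noteq> 0" "c = [:[:[:k:]:]:]" using \<open>is_unit c\<close> by (force simp: is_unit_poly_iff)
  have "pow_subst2 3 (coeff H 0) = - ((varX2\<^sup>2 + [:[:w:]:] * varY2\<^sup>2) ^ 3 * [:[:k:]:])"
    using arg_cong[OF eq, of "\<lambda>F. coeff F 0"] by (simp add: coeff_pow_subst3 k G4_factor_def)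
  \<comment> \<open>the image contains the monomial \<open>X\<^sup>4 Y\<^sup>2\<close>, but \<open>pow_subst2 3\<close> produces only exponents divisible by 3\<close>
  moreover have "coeff (coeff ((varX2\<^sup>2 + [:[:w:]:] * varY2\<^sup>2) ^ 3 * [:[:k:]:]) 2) 4 = 3 * w * k"
    by (simp add: varX2_def varY2_def eval_nat_numeral algebra_simps)
  ultimately have "coeff (coeff (pow_subst2 3 (coeff H 0)) 2) 4 \<noteq> 0" using assms k by simp
  from coeff_pow_subst2_nonzero_dvd[OF _ this] show False by simp
qed

lemma G4_irreducible:
  assumes two: "(2::'a::alg_closed_field) \<noteq> 0" and three: "(3::'a) \<noteq> 0"
  shows "irreducible (G4 :: 'a poly poly poly)"
proof (rule irreducible_pow_subst3I[where n = 3])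
  show "is_unit (lead_coeff (G4 :: 'a poly poly poly))" "degree (G4 :: 'a poly poly poly) > 0"
    unfolding G4_conv_poly_Z by simp_all
  obtain \<omega> :: 'a where "poly [:1, 1, 1:] \<omega> = 0"
    using alg_closed_imp_poly_has_root[of "[:1, 1, 1:]"] by auto
  then have \<omega>: "\<omega> * \<omega> + \<omega> + 1 = 0" by (simp add: algebra_simps)
  have prime: "prime_elem (G4_factor w)" if "w \<noteq> 0" for w :: 'a
  proof -
    obtain \<mu> where "\<mu> ^ 2 = - inverse w" using nth_root_exists[of 2 "- inverse w"] by auto
    with that have "w * (\<mu> * \<mu>) = -1" by (simp add: power2_eq_square)
    then show ?thesis using two by (rule prime_elem_G4_factor)
  qed
  have "\<omega> \<noteq> 0" "\<omega> * \<omega> \<noteq> 0" using \<omega> by auto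
  fix A B :: "'a poly poly poly"
  assume "pow_subst3 3 A * pow_subst3 3 B = pow_subst3 3 G4"
  then have factors: "pow_subst3 3 A * pow_subst3 3 B = G4_factor 1 * G4_factor \<omega> * (- G4_factor (\<omega> * \<omega>))"
    by (simp only: pow_subst3_G4[OF \<omega>])
  show "is_unit (pow_subst3 3 A) \<or> is_unit (pow_subst3 3 B)"
  proof (rule ccontr)
    have "prime_elem (G4_factor (1::'a))" "prime_elem (G4_factor \<omega>)" "prime_elem (- G4_factor (\<omega> * \<omega>))"
      using prime[of 1] prime[OF \<open>\<omega> \<noteq> 0\<close>] prime[OF \<open>\<omega> * \<omega> \<noteq> 0\<close>]
        prime_elem_mult_unit_left[of "-1" "G4_factor (\<omega> * \<omega>)"] by simp_all
    moreover assume "\<not> (is_unit (pow_subst3 3 A) \<or> is_unit (pow_subst3 3 B))"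
    ultimately obtain R c where "R \<in> {G4_factor 1, G4_factor \<omega>, - G4_factor (\<omega> * \<omega>)}" "is_unit c"
      and "pow_subst3 3 A = R * c \<or> pow_subst3 3 B = R * c"
      using associated_factor_of_three_primes[OF _ _ _ factors] by blast
    then show False
      using G4_factor_neq_pow_subst3[OF _ three, of _ c] \<open>\<omega> \<noteq> 0\<close>
        G4_factor_neq_pow_subst3[OF \<open>\<omega> * \<omega> \<noteq> 0\<close> three, of "- c"] by auto
  qed
qed

theorem lemmaA1:
  fixes p q k :: nat
  assumes "prime p" and "p > 3" and "k \<ge> 1" and "q = p ^ k"
    and "CHAR('a::alg_closed_field) = p"
    and "algebraic_over_prime_field TYPE('a)"
  shows "irreducible (G1 :: 'a poly poly poly) \<and> irreducible (G2 :: 'a poly poly poly) \<and>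
         irreducible (G3 :: 'a poly poly poly) \<and> irreducible (G4 :: 'a poly poly poly)"
proof -
  \<comment> \<open>only \<open>char K \<noteq> 2, 3\<close> is used\<close>
  have nonzero: "(of_nat m :: 'a) \<noteq> 0" if "0 < m" "m < p" for m
    using that assms(5) by (auto simp: of_nat_eq_0_iff_char_dvd dest: dvd_imp_le)
  have two: "(2::'a) \<noteq> 0" and three: "(3::'a) \<noteq> 0"
    using nonzero[of 2] nonzero[of 3] \<open>p > 3\<close> by simp_all
  obtain i :: 'a where "i ^ 2 = -1" using nth_root_exists[of 2 "-1 :: 'a"] by auto
  then have i: "i * i = -1" by (simp add: power2_eq_square)
  show ?thesis
    using G1_irreducible[OF two i] G2_irreducible[OF two] G3_irreducible[OF two three]
      G4_irreducible[OF two three] by blast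
qed

end
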